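(* Let $k\ge2$. Consider the system of linear equations in the $k^2$ unknowns $(x_{ij})_{i,j=1}^k$: $\sum_{j=1}^k x_{ij}=p_i$ ($i=1,\dots,k$); $\sum_{i=1}^k x_{ij}=q_j$ ($j=1,\dots,k$); $x_{ii}=\min(p_i,q_i)$ ($i=1,\dots,k$); $x_{ii}+x_{ij}+x_{ji}+x_{jj}=\min(p_i+p_j,q_i+q_j)$ ($1\le i<j\le k$). The coefficient matrix of this system of $3k+\binom{k}{2}$ equations has rank $2k-1+\binom{k}{2}$.
   Context: $p=(p_1,\dots,p_k)$ and $q=(q_1,\dots,q_k)$ are probability vectors (nonnegative entries summing to 1); only the coefficient matrix (a 0/1 matrix) matters for the rank. *)

theory Defs
  imports "Jordan_Normal_Form.DL_Rank"
begin

text \<open>Unknowns x_ij (0-based i,j < k) are indexed by column i*k+j of the coefficient matrix.\<close>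

definition row_sum_eq :: "nat \<Rightarrow> nat \<Rightarrow> real vec" where
  "row_sum_eq k i = vec (k*k) (\<lambda>c. if c div k = i then 1 else 0)"

definition col_sum_eq :: "nat \<Rightarrow> nat \<Rightarrow> real vec" where
  "col_sum_eq k j = vec (k*k) (\<lambda>c. if c mod k = j then 1 else 0)"

definition diag_eq :: "nat \<Rightarrow> nat \<Rightarrow> real vec" where
  "diag_eq k i = vec (k*k) (\<lambda>c. if c = i*k+i then 1 else 0)"

definition pair_eq :: "nat \<Rightarrow> nat \<Rightarrow> nat \<Rightarrow> real vec" where
  "pair_eq k i j = vec (k*k) (\<lambda>c. if c \<in> {i*k+i, i*k+j, j*k+i, j*k+j} then 1 else 0)"

definition coeff_matrix :: "nat \<Rightarrow> real mat" where
  "coeff_matrix k = mat_of_rows (k*k)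
     (map (row_sum_eq k) [0..<k] @ map (col_sum_eq k) [0..<k] @ map (diag_eq k) [0..<k]
      @ concat (map (\<lambda>i. map (\<lambda>j. pair_eq k i j) [Suc i..<k]) [0..<k]))"

end

theory Submission
  imports Defs
begin

text \<open>Index the unknowns by the cells \<open>(i, j)\<close> of a \<open>k \<times> k\<close> array. The columns of the
  coefficient matrix belonging to the first row and to the lower triangle (diagonal included) form
  a basis of its column space, and there are \<open>(k - 1) + k + (k choose 2)\<close> of them.
  They span: for \<open>0 < i < j\<close> every equation has the same total coefficient on the cells
  \<open>(i, j), (0, i), (j, 0)\<close> as on \<open>(i, 0), (j, i), (0, j)\<close>, so the column of \<open>(i, j)\<close> is a signed
  sum of five pivot columns. They are independent: a kernel vector supported on the pivot cells
  vanishes on the diagonal by the diagonal equations, then on the lower triangle by the pair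
  equations, on the first column by the row sums, and finally on the first row by the pair
  equations with \<open>i = 0\<close>.\<close>

lemma mult_mat_vec_index_supported:
  fixes A :: "'a :: comm_semiring_0 mat"
  assumes A: "A \<in> carrier_mat n nc" and v: "v \<in> carrier_vec nc" and J: "J \<subseteq> {..<nc}"
    and supp: "\<And>c. c < nc \<Longrightarrow> c \<notin> J \<Longrightarrow> v $ c = 0" and r: "r < n"
  shows "(A *\<^sub>v v) $ r = (\<Sum>c\<in>J. v $ c * col A c $ r)"
proof -
  have "(A *\<^sub>v v) $ r = (\<Sum>c<nc. v $ c * col A c $ r)"
    using A v r by (auto simp: scalar_prod_def atLeast0LessThan mult.commute intro!: sum.cong)
  also have "\<dots> = (\<Sum>c\<in>J. v $ c * col A c $ r)"
    using J supp by (intro sum.mono_neutral_right) auto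
  finally show ?thesis .
qed

context vec_space
begin

lemma mult_mat_vec_eq_lincomb_cols:
  fixes A :: "'a mat"
  assumes A: "A \<in> carrier_mat n nc" and J: "J \<subseteq> {..<nc}" and inj: "inj_on (col A) J"
  shows "A *\<^sub>v vec nc (\<lambda>c. if c \<in> J then a (col A c) else 0) = lincomb a (col A ` J)"
    (is "A *\<^sub>v ?v = _")
proof -
  have carrier: "col A ` J \<subseteq> carrier_vec n" using A by auto
  have dim: "dim_vec (lincomb a (col A ` J)) = n"
    using carrier finite_subset[OF J] by (intro lincomb_dim) auto
  show ?thesis
  proof (rule eq_vecI)
    fix r assume "r < dim_vec (lincomb a (col A ` J))"
    then have r: "r < n" using dim by simp
    have "(A *\<^sub>v ?v) $ r = (\<Sum>c\<in>J. ?v $ c * col A c $ r)"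
      using r by (intro mult_mat_vec_index_supported[OF A _ J]) simp_all
    also have "\<dots> = (\<Sum>c\<in>J. a (col A c) * col A c $ r)"
      using J by (intro sum.cong refl) auto
    also have "\<dots> = (\<Sum>w\<in>col A ` J. a w * w $ r)"
      by (simp add: sum.reindex[OF inj])
    also have "\<dots> = lincomb a (col A ` J) $ r"
      using r carrier by (simp add: lincomb_index)
    finally show "(A *\<^sub>v ?v) $ r = lincomb a (col A ` J) $ r" .
  qed (use A dim in simp)
qed

lemma inj_on_col_of_kernel_support:
  fixes A :: "'a mat"
  assumes A: "A \<in> carrier_mat n nc" and J: "J \<subseteq> {..<nc}"
    and ker: "\<And>v. v \<in> carrier_vec nc \<Longrightarrow> (\<And>c. c < nc \<Longrightarrow> c \<notin> J \<Longrightarrow> v $ c = 0) \<Longrightarrow>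
                  A *\<^sub>v v = 0\<^sub>v n \<Longrightarrow> v = 0\<^sub>v nc"
  shows "inj_on (col A) J"
proof (rule inj_onI, rule ccontr)
  fix c c' assume c: "c \<in> J" "c' \<in> J" and eq: "col A c = col A c'" and neq: "c \<noteq> c'"
  define v :: "'a vec" where "v = vec nc (\<lambda>l. if l = c then 1 else if l = c' then -1 else 0)"
  have cc': "c < nc" "c' < nc" using c J by auto
  have "A *\<^sub>v v = 0\<^sub>v n"
  proof (rule eq_vecI)
    fix r assume r: "r < dim_vec (0\<^sub>v n :: 'a vec)"
    then have "(A *\<^sub>v v) $ r = (\<Sum>l\<in>{c,c'}. v $ l * col A l $ r)"
      using cc' by (intro mult_mat_vec_index_supported[OF A]) (auto simp: v_def)
    then show "(A *\<^sub>v v) $ r = 0\<^sub>v n $ r" using r cc' neq eq by (simp add: v_def)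
  qed (use A in simp)
  then have "v = 0\<^sub>v nc" using cc' c by (intro ker) (auto simp: v_def)
  moreover have "v $ c = 1" using cc' by (simp add: v_def)
  ultimately show False using cc' by simp
qed

lemma lin_indpt_cols_of_kernel_support:
  fixes A :: "'a mat"
  assumes A: "A \<in> carrier_mat n nc" and J: "J \<subseteq> {..<nc}"
    and ker: "\<And>v. v \<in> carrier_vec nc \<Longrightarrow> (\<And>c. c < nc \<Longrightarrow> c \<notin> J \<Longrightarrow> v $ c = 0) \<Longrightarrow>
                  A *\<^sub>v v = 0\<^sub>v n \<Longrightarrow> v = 0\<^sub>v nc"
  shows "lin_indpt (col A ` J)"
proof
  assume dep: "lin_dep (col A ` J)"
  have fin: "finite (col A ` J)" using finite_subset[OF J] by simp
  have carrier: "col A ` J \<subseteq> carrier_vec n" using A by auto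
  obtain a u where lc: "lincomb a (col A ` J) = 0\<^sub>v n"
    and u: "u \<in> col A ` J" and au: "a u \<noteq> 0"
    using finite_lin_dep[OF fin dep] carrier by auto
  define v where "v = vec nc (\<lambda>c. if c \<in> J then a (col A c) else 0)"
  have "A *\<^sub>v v = lincomb a (col A ` J)"
    unfolding v_def by (rule mult_mat_vec_eq_lincomb_cols[OF A J inj_on_col_of_kernel_support[OF A J ker]])
  then have "v = 0\<^sub>v nc" using lc by (intro ker) (auto simp: v_def)
  obtain c where c: "c \<in> J" "u = col A c" using u by blast
  have "v $ c = a u" using c J by (auto simp: v_def)
  then show False using \<open>v = 0\<^sub>v nc\<close> c J au by auto
qed

lemma rank_eq_card_of_kernel_support:
  fixes A :: "'a mat"
  assumes A: "A \<in> carrier_mat n nc" and J: "J \<subseteq> {..<nc}"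
    and ker: "\<And>v. v \<in> carrier_vec nc \<Longrightarrow> (\<And>c. c < nc \<Longrightarrow> c \<notin> J \<Longrightarrow> v $ c = 0) \<Longrightarrow>
                  A *\<^sub>v v = 0\<^sub>v n \<Longrightarrow> v = 0\<^sub>v nc"
    and spans: "\<And>c. c < nc \<Longrightarrow> col A c \<in> span (col A ` J)"
  shows "rank A = card J"
proof -
  let ?U = "col A ` J"
  have cols: "set (cols A) = col A ` {..<nc}" using A by (simp add: cols_def atLeast0LessThan)
  have carrier: "?U \<subseteq> carrier_vec n" using A by auto
  have indpt: "lin_indpt ?U" by (rule lin_indpt_cols_of_kernel_support[OF A J ker])
  have "maximal ?U (\<lambda>T. T \<subseteq> set (cols A) \<and> lin_indpt T)"
    unfolding maximal_def
  proof (intro conjI allI impI)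
    show "?U \<subseteq> set (cols A)" using cols J by auto
    fix B assume B: "?U \<subseteq> B \<and> B \<subseteq> set (cols A) \<and> lin_indpt B"
    show "B = ?U"
    proof (rule ccontr)
      assume "B \<noteq> ?U"
      then obtain y where y: "y \<in> B" "y \<notin> ?U" using B by auto
      then have "y \<in> span ?U" "y \<in> carrier_vec n" using B cols spans A by auto
      then have "lin_dep (?U \<union> {y})" using lin_dep_iff_in_span[OF carrier indpt _ y(2)] by simp
      then have "lin_dep B" by (rule supset_ld_is_ld) (use y B in auto)
      then show False using B by simp
    qed
  qed (rule indpt)
  then have "rank A = card ?U" by (rule rank_card_indpt[OF A])
  also have "\<dots> = card J" by (rule card_image[OF inj_on_col_of_kernel_support[OF A J ker]])
  finally show ?thesis .
qed

end

lemma sum_lessThan_eq_choose_two: "(\<Sum>i<k. i) = k choose 2"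
  by (simp add: Sum_Ico_nat choose_two atLeast0LessThan[symmetric])

lemma sum_lessThan_square:
  fixes f :: "nat \<Rightarrow> 'a :: comm_monoid_add"
  shows "(\<Sum>c<k * k. f c) = (\<Sum>i<k. \<Sum>j<k. f (i * k + j))"
proof -
  have "(\<Sum>c<k * k. f c) = (\<Sum>i<k. sum f {i * k..<i * k + k})"
    by (rule sum.nat_group[symmetric])
  also have "\<dots> = (\<Sum>i<k. \<Sum>j<k. f (i * k + j))"
  proof (rule sum.cong[OF refl])
    fix i
    show "sum f {i * k..<i * k + k} = (\<Sum>j<k. f (i * k + j))"
      using sum.shift_bounds_nat_ivl[of f 0 "i * k" k] by (simp add: atLeast0LessThan add.commute)
  qed
  finally show ?thesis .
qed

lemma cell_index_less:
  assumes "i < k" "j < k"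
  shows "i * k + j < k * (k::nat)"
proof -
  have "i * k + j < Suc i * k" using assms(2) by simp
  also have "\<dots> \<le> k * k" using assms(1) by (intro mult_le_mono1) simp
  finally show ?thesis .
qed

lemma cell_index_eq_iff:
  assumes "j < k" "j' < k"
  shows "i * k + j = i' * k + j' \<longleftrightarrow> i = i' \<and> j = (j'::nat)"
proof
  assume eq: "i * k + j = i' * k + j'"
  have "(i * k + j) div k = (i' * k + j') div k" "(i * k + j) mod k = (i' * k + j') mod k"
    using eq by simp_all
  then show "i = i' \<and> j = j'" using assms by simp
qed simp

lemma inj_on_cell_index: "inj_on (\<lambda>(i, j). i * k + j) ({..<k} \<times> {..<k::nat})"
proof (rule inj_onI, clarify)
  fix i j i' j' assume "j < k" "j' < k" "i * k + j = i' * k + j'"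
  then show "i = i' \<and> j = j'" by (rule cell_index_eq_iff[THEN iffD1])
qed

definition coeff_rows :: "nat \<Rightarrow> real vec list" where
  "coeff_rows k = map (row_sum_eq k) [0..<k] @ map (col_sum_eq k) [0..<k] @ map (diag_eq k) [0..<k]
      @ concat (map (\<lambda>i. map (\<lambda>j. pair_eq k i j) [Suc i..<k]) [0..<k])"

lemma coeff_matrix_eq_mat_of_rows: "coeff_matrix k = mat_of_rows (k * k) (coeff_rows k)"
  unfolding coeff_matrix_def coeff_rows_def ..

lemma length_coeff_rows: "length (coeff_rows k) = 3 * k + (k choose 2)"
proof -
  have "length (concat (map (\<lambda>i. map (pair_eq k i) [Suc i..<k]) [0..<k])) = (\<Sum>i<k. k - Suc i)"
    by (simp add: length_concat comp_def sum_list_sum_nth atLeast0LessThan)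
  also have "\<dots> = k choose 2"
    using sum.nat_diff_reindex[of "\<lambda>i. i" k] by (simp add: sum_lessThan_eq_choose_two)
  finally show ?thesis by (simp add: coeff_rows_def)
qed

lemma set_coeff_rows:
  "set (coeff_rows k) = row_sum_eq k ` {..<k} \<union> col_sum_eq k ` {..<k} \<union> diag_eq k ` {..<k}
     \<union> {pair_eq k a b | a b. a < b \<and> b < k}"
proof -
  have "set (concat (map (\<lambda>i. map (pair_eq k i) [Suc i..<k]) [0..<k]))
      = {pair_eq k a b | a b. a < b \<and> b < k}"
  proof (intro equalityI subsetI)
    fix w assume "w \<in> {pair_eq k a b | a b. a < b \<and> b < k}"
    then obtain a b where "a < b" "b < k" "w = pair_eq k a b" by blast
    then show "w \<in> set (concat (map (\<lambda>i. map (pair_eq k i) [Suc i..<k]) [0..<k]))"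
      by (auto intro!: bexI[of _ a])
  qed (force simp: Suc_le_eq)
  then show ?thesis by (simp add: coeff_rows_def atLeast0LessThan Un_assoc)
qed

lemma coeff_rows_carrier: "w \<in> set (coeff_rows k) \<Longrightarrow> w \<in> carrier_vec (k * k)"
  by (auto simp: set_coeff_rows row_sum_eq_def col_sum_eq_def diag_eq_def pair_eq_def)

lemma row_sum_eq_cell: "i < k \<Longrightarrow> j < k \<Longrightarrow> row_sum_eq k a $ (i * k + j) = (if i = a then 1 else 0)"
  by (simp add: row_sum_eq_def cell_index_less)

lemma col_sum_eq_cell: "i < k \<Longrightarrow> j < k \<Longrightarrow> col_sum_eq k b $ (i * k + j) = (if j = b then 1 else 0)"
  by (simp add: col_sum_eq_def cell_index_less)

lemma diag_eq_cell:
  "i < k \<Longrightarrow> j < k \<Longrightarrow> a < k \<Longrightarrow> diag_eq k a $ (i * k + j) = (if i = a \<and> j = a then 1 else 0)"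
  by (simp add: diag_eq_def cell_index_less cell_index_eq_iff)

lemma pair_eq_cell:
  "i < k \<Longrightarrow> j < k \<Longrightarrow> a < k \<Longrightarrow> b < k \<Longrightarrow>
    pair_eq k a b $ (i * k + j) = (if i \<in> {a, b} \<and> j \<in> {a, b} then 1 else 0)"
  by (auto simp: pair_eq_def cell_index_less cell_index_eq_iff)

lemma scalar_prod_cell_indicator:
  assumes v: "v \<in> carrier_vec (k * k)"
    and w: "\<And>i j. i < k \<Longrightarrow> j < k \<Longrightarrow> w $ (i * k + j) = (if P i j then 1 else 0)"
  shows "w \<bullet> v = (\<Sum>i<k. \<Sum>j<k. if P i j then v $ (i * k + j) else (0::'a::semiring_1))"
proof -
  have "w \<bullet> v = (\<Sum>i<k. \<Sum>j<k. w $ (i * k + j) * v $ (i * k + j))"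
    using v by (simp add: scalar_prod_def atLeast0LessThan sum_lessThan_square)
  also have "\<dots> = (\<Sum>i<k. \<Sum>j<k. if P i j then v $ (i * k + j) else 0)"
    by (intro sum.cong refl) (simp add: w)
  finally show ?thesis .
qed

lemma row_sum_eq_scalar_prod:
  assumes a: "a < k" and v: "v \<in> carrier_vec (k * k)"
  shows "row_sum_eq k a \<bullet> v = (\<Sum>j<k. v $ (a * k + j))"
proof -
  have "row_sum_eq k a \<bullet> v = (\<Sum>i<k. \<Sum>j<k. if i = a then v $ (i * k + j) else 0)"
    by (rule scalar_prod_cell_indicator[OF v]) (simp add: row_sum_eq_cell)
  also have "\<dots> = (\<Sum>i<k. if i = a then (\<Sum>j<k. v $ (i * k + j)) else 0)"
    by (intro sum.cong refl) auto
  also have "\<dots> = (\<Sum>j<k. v $ (a * k + j))" using a by simp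
  finally show ?thesis .
qed

lemma diag_eq_scalar_prod:
  assumes a: "a < k" and v: "v \<in> carrier_vec (k * k)"
  shows "diag_eq k a \<bullet> v = v $ (a * k + a)"
proof -
  have "diag_eq k a \<bullet> v = (\<Sum>i<k. \<Sum>j<k. if i = a \<and> j = a then v $ (i * k + j) else 0)"
    by (rule scalar_prod_cell_indicator[OF v]) (simp add: diag_eq_cell a)
  also have "\<dots> = (\<Sum>i<k. if i = a then (\<Sum>j<k. if j = a then v $ (i * k + j) else 0) else 0)"
    by (intro sum.cong refl) auto
  also have "\<dots> = v $ (a * k + a)" using a by simp
  finally show ?thesis .
qed

lemma pair_eq_scalar_prod:
  assumes ab: "a < b" "b < k" and v: "v \<in> carrier_vec (k * k)"
  shows "pair_eq k a b \<bullet> v = v $ (a * k + a) + v $ (a * k + b) + v $ (b * k + a) + v $ (b * k + b)"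
proof -
  have "pair_eq k a b \<bullet> v
      = (\<Sum>i<k. \<Sum>j<k. if i \<in> {a, b} \<and> j \<in> {a, b} then v $ (i * k + j) else 0)"
    using ab by (intro scalar_prod_cell_indicator[OF v]) (simp add: pair_eq_cell)
  also have "\<dots> = (\<Sum>i<k. if i \<in> {a, b} then (\<Sum>j<k. if j \<in> {a, b} then v $ (i * k + j) else 0) else 0)"
    by (intro sum.cong refl) auto
  also have "\<dots> = (\<Sum>i\<in>{..<k} \<inter> {a, b}. \<Sum>j\<in>{..<k} \<inter> {a, b}. v $ (i * k + j))"
    by (simp only: sum.inter_restrict[OF finite_lessThan])
  also have "{..<k} \<inter> {a, b} = {a, b}" using ab by auto
  finally show ?thesis using ab by simp
qed

lemma coeff_rows_kernel_trivial_on_pivots: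
  assumes v: "v \<in> carrier_vec (k * k)"
    and eqs: "\<And>w. w \<in> set (coeff_rows k) \<Longrightarrow> w \<bullet> v = 0"
    and upper: "\<And>i j. 0 < i \<Longrightarrow> i < j \<Longrightarrow> j < k \<Longrightarrow> v $ (i * k + j) = 0"
  shows "v = 0\<^sub>v (k * k)"
proof -
  define x where "x i j = v $ (i * k + j)" for i j
  have upper': "x i j = 0" if "0 < i" "i < j" "j < k" for i j
    using upper[OF that] by (simp add: x_def)
  have diag: "x a a = 0" if "a < k" for a
    using eqs[of "diag_eq k a"] diag_eq_scalar_prod[OF that v] that by (simp add: set_coeff_rows x_def)
  have antisym: "x a b + x b a = 0" if "a < b" "b < k" for a b
  proof -
    have "pair_eq k a b \<in> set (coeff_rows k)" using that by (auto simp: set_coeff_rows)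
    then show ?thesis
      using eqs pair_eq_scalar_prod[OF that v] diag[of a] diag[of b] that by (simp add: x_def)
  qed
  have lower: "x b a = 0" if "0 < a" "a < b" "b < k" for a b
    using antisym[of a b] upper'[OF that] that by simp
  have first_col: "x a 0 = 0" if "0 < a" "a < k" for a
  proof -
    have "0 = (\<Sum>j<k. x a j)"
      using eqs[of "row_sum_eq k a"] row_sum_eq_scalar_prod[OF that(2) v] that
      by (simp add: set_coeff_rows x_def)
    also have "\<dots> = (\<Sum>j\<in>{0}. x a j)"
    proof (rule sum.mono_neutral_right)
      show "\<forall>j\<in>{..<k} - {0}. x a j = 0"
      proof
        fix j assume "j \<in> {..<k} - {0}"
        then show "x a j = 0" using diag lower upper' that by (cases j a rule: linorder_cases) auto
      qed
    qed (use that in auto)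
    finally show ?thesis by simp
  qed
  have first_row: "x 0 b = 0" if "0 < b" "b < k" for b
    using antisym[of 0 b] first_col[of b] that by simp
  have cells: "x i j = 0" if "i < k" "j < k" for i j
  proof (cases rule: linorder_cases[of i j])
    case less
    then show ?thesis using first_row upper' that by (cases "i = 0") auto
  next
    case equal
    then show ?thesis using diag that by simp
  next
    case greater
    then show ?thesis using first_col lower that by (cases "j = 0") auto
  qed
  show ?thesis
  proof (rule eq_vecI)
    fix c assume "c < dim_vec (0\<^sub>v (k * k) :: real vec)"
    then have c: "c < k * k" by simp
    then have "0 < k" by (cases k) auto
    then have "c div k < k" "c mod k < k"
      using c by (auto simp: less_mult_imp_div_less)
    then have "x (c div k) (c mod k) = 0" by (rule cells)
    then show "v $ c = 0\<^sub>v (k * k) $ c" using c by (simp add: x_def)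
  qed (use v in simp)
qed

lemma coeff_row_cycle:
  assumes w: "w \<in> set (coeff_rows k)" and ij: "0 < i" "i < j" "j < k"
  shows "w $ (0 * k + i) + w $ (j * k + 0) + w $ (i * k + j)
       = w $ (i * k + 0) + w $ (j * k + i) + w $ (0 * k + j)"
proof -
  have k: "0 < k" "i < k" "j < k" using ij by auto
  from w consider (row) a where "a < k" "w = row_sum_eq k a"
    | (col) b where "b < k" "w = col_sum_eq k b"
    | (diag) a where "a < k" "w = diag_eq k a"
    | (pair) a b where "a < b" "b < k" "w = pair_eq k a b"
    unfolding set_coeff_rows by blast
  then show ?thesis
  proof cases
    case row
    then show ?thesis by (simp only: row_sum_eq_cell k)
  next
    case col
    then show ?thesis by (simp only: col_sum_eq_cell k)
  next
    case diag
    then show ?thesis using ij by (simp only: diag_eq_cell k) auto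
  next
    case pair
    then show ?thesis by (simp only: pair_eq_cell k) (simp add: conj_commute)
  qed
qed

definition pivot_cells :: "nat \<Rightarrow> (nat \<times> nat) set" where
  "pivot_cells k = {(i, j). i < k \<and> j < k \<and> (i = 0 \<or> j \<le> i)}"

definition pivot_cols :: "nat \<Rightarrow> nat set" where
  "pivot_cols k = (\<lambda>(i, j). i * k + j) ` pivot_cells k"

lemma card_pivot_cells:
  assumes "0 < k"
  shows "card (pivot_cells k) = 2 * k - 1 + (k choose 2)"
proof -
  have split: "pivot_cells k = (SIGMA i:{..<k}. {..i}) \<union> {0} \<times> {1..<k}"
    by (auto simp: pivot_cells_def)
  have "card (SIGMA i:{..<k}. {..i}) = (\<Sum>i<k. i + 1)" by (simp add: card_SigmaI)
  also have "\<dots> = (\<Sum>i<k. i) + k" by (subst sum.distrib) simp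
  also have "\<dots> = k + (k choose 2)" by (simp add: sum_lessThan_eq_choose_two)
  finally show ?thesis unfolding split using assms by (subst card_Un_disjoint) auto
qed

lemma pivot_cells_subset: "pivot_cells k \<subseteq> {..<k} \<times> {..<k}"
  by (auto simp: pivot_cells_def)

lemma card_pivot_cols: "card (pivot_cols k) = card (pivot_cells k)"
  unfolding pivot_cols_def
  by (rule card_image[OF inj_on_subset[OF inj_on_cell_index pivot_cells_subset]])

lemma pivot_cols_subset: "pivot_cols k \<subseteq> {..<k * k}"
proof
  fix c assume "c \<in> pivot_cols k"
  then obtain i j where "(i, j) \<in> pivot_cells k" "c = i * k + j" by (auto simp: pivot_cols_def)
  then show "c \<in> {..<k * k}" by (simp add: pivot_cells_def cell_index_less)
qed

lemma cell_in_pivot_cols_iff: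
  assumes "i < k" "j < k"
  shows "i * k + j \<in> pivot_cols k \<longleftrightarrow> i = 0 \<or> j \<le> i"
proof -
  have "(\<lambda>(i, j). i * k + j) (i, j) \<in> (\<lambda>(i, j). i * k + j) ` pivot_cells k \<longleftrightarrow> (i, j) \<in> pivot_cells k"
    by (rule inj_on_image_mem_iff[OF inj_on_cell_index _ pivot_cells_subset]) (use assms in simp)
  then show ?thesis using assms by (simp add: pivot_cols_def pivot_cells_def)
qed

lemma dim_row_coeff_matrix: "dim_row (coeff_matrix k) = 3 * k + (k choose 2)"
  by (simp add: coeff_matrix_eq_mat_of_rows length_coeff_rows)

lemma coeff_matrix_carrier: "coeff_matrix k \<in> carrier_mat (3 * k + (k choose 2)) (k * k)"
  using mat_of_rows_carrier(1)[of "k * k" "coeff_rows k"]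
  by (simp add: coeff_matrix_eq_mat_of_rows length_coeff_rows)

lemma col_coeff_matrix_index:
  "c < k * k \<Longrightarrow> r < length (coeff_rows k) \<Longrightarrow> col (coeff_matrix k) c $ r = coeff_rows k ! r $ c"
  by (simp add: coeff_matrix_eq_mat_of_rows mat_of_rows_index)

lemma coeff_matrix_kernel_trivial_on_pivots:
  assumes v: "v \<in> carrier_vec (k * k)"
    and supp: "\<And>c. c < k * k \<Longrightarrow> c \<notin> pivot_cols k \<Longrightarrow> v $ c = 0"
    and ker: "coeff_matrix k *\<^sub>v v = 0\<^sub>v (3 * k + (k choose 2))"
  shows "v = 0\<^sub>v (k * k)"
proof (rule coeff_rows_kernel_trivial_on_pivots[OF v])
  fix w assume "w \<in> set (coeff_rows k)"
  then obtain r where r: "r < length (coeff_rows k)" "w = coeff_rows k ! r"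
    by (auto simp: in_set_conv_nth)
  then have "(coeff_matrix k *\<^sub>v v) $ r = w \<bullet> v"
    using coeff_rows_carrier[OF nth_mem] by (simp add: coeff_matrix_eq_mat_of_rows)
  then show "w \<bullet> v = 0" using ker r by (simp add: length_coeff_rows)
next
  fix i j assume "0 < i" "i < j" "j < k"
  then show "v $ (i * k + j) = 0"
    by (intro supp) (simp_all add: cell_index_less cell_in_pivot_cols_iff)
qed

lemma coeff_matrix_col_cycle:
  fixes i j k :: nat
  defines "A \<equiv> coeff_matrix k"
  assumes ij: "0 < i" "i < j" "j < k"
  shows "col A (0 * k + i) + col A (j * k + 0) + col A (i * k + j)
       = col A (i * k + 0) + col A (j * k + i) + col A (0 * k + j)"
proof (rule eq_vecI)
  have k: "0 < k" "i < k" using ij by auto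
  fix r assume "r < dim_vec (col A (i * k + 0) + col A (j * k + i) + col A (0 * k + j))"
  then have r: "r < length (coeff_rows k)" by (simp add: A_def coeff_matrix_eq_mat_of_rows)
  have cell: "col A (a * k + b) $ r = coeff_rows k ! r $ (a * k + b)" if "a < k" "b < k" for a b
    using col_coeff_matrix_index[OF cell_index_less[OF that] r] by (simp add: A_def)
  show "(col A (0 * k + i) + col A (j * k + 0) + col A (i * k + j)) $ r
      = (col A (i * k + 0) + col A (j * k + i) + col A (0 * k + j)) $ r"
    using coeff_row_cycle[OF nth_mem[OF r] ij] r k ij
      cell[of i j] cell[of 0 i] cell[of j 0] cell[of i 0] cell[of j i] cell[of 0 j]
    by (simp add: A_def coeff_matrix_eq_mat_of_rows)
qed (simp add: A_def)

context
  fixes k :: nat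
begin

interpretation vec_space "TYPE(real)" "3 * k + (k choose 2)" .

lemma col_coeff_matrix_in_span_pivots:
  assumes c: "c < k * k"
  shows "col (coeff_matrix k) c \<in> span (col (coeff_matrix k) ` pivot_cols k)"
proof -
  let ?A = "coeff_matrix k"
  let ?U = "col ?A ` pivot_cols k"
  have carrier: "?U \<subseteq> carrier_vec (3 * k + (k choose 2))"
    using col_dim[of ?A] unfolding dim_row_coeff_matrix by blast
  have pivot: "col ?A (a * k + b) \<in> span ?U" if "a < k" "b < k" "a = 0 \<or> b \<le> a" for a b
    using that cell_in_pivot_cols_iff[of a k b] by (intro span_mem[OF carrier]) auto
  have "0 < k" using c by (cases k) auto
  define i j where "i = c div k" and "j = c mod k"
  have ij: "i < k" "j < k" "c = i * k + j"
    using c \<open>0 < k\<close> by (auto simp: i_def j_def less_mult_imp_div_less)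
  show ?thesis
  proof (cases "i = 0 \<or> j \<le> i")
    case True
    then show ?thesis using pivot ij by simp
  next
    case False
    then have cyc: "0 < i" "i < j" by auto
    have left: "col ?A (0 * k + i) + col ?A (j * k + 0) \<in> span ?U"
      using ij cyc by (intro span_add1[OF carrier] pivot) auto
    have right: "col ?A (i * k + 0) + col ?A (j * k + i) + col ?A (0 * k + j) \<in> span ?U"
      using ij cyc by (intro span_add1[OF carrier] pivot) auto
    have "col ?A (i * k + j) \<in> carrier_vec (3 * k + (k choose 2))"
      using col_dim[of ?A] unfolding dim_row_coeff_matrix by blast
    then have "col ?A (i * k + j) \<in> span ?U"
      using span_add[OF carrier left] right coeff_matrix_col_cycle[OF cyc ij(2)] by simp
    then show ?thesis using ij by simp
  qed
qed

end

theorem theoremS1: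
  fixes k :: nat
  assumes "k \<ge> 2"
  shows "dim_row (coeff_matrix k) = 3*k + (k choose 2) \<and>
         vec_space.rank (dim_row (coeff_matrix k)) (coeff_matrix k) = 2*k - 1 + (k choose 2)"
proof
  show dim: "dim_row (coeff_matrix k) = 3 * k + (k choose 2)"
    by (rule dim_row_coeff_matrix)
  interpret vec_space "TYPE(real)" "3 * k + (k choose 2)" .
  have "rank (coeff_matrix k) = card (pivot_cols k)"
    using coeff_matrix_carrier pivot_cols_subset coeff_matrix_kernel_trivial_on_pivots
      col_coeff_matrix_in_span_pivots
    by (rule rank_eq_card_of_kernel_support) simp_all
  then show "vec_space.rank (dim_row (coeff_matrix k)) (coeff_matrix k) = 2 * k - 1 + (k choose 2)"
    using assms unfolding dim by (simp add: card_pivot_cols card_pivot_cells)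
qed

end
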